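(* Let $k\ge0$, $p\in[0,1]$, and fix sequences $\xi^x,\xi^y$. (i) Let $i_0\le i_1$ and $j$ be integers such that $H^y_{(k,j)}=0$ and $\sum_{i=i_0}^{i_1}H^x_{(k,i)}\le1$, and let $I=\bigcup_{i=i_0}^{i_1}I_{(k,i)}$. Then for every $k$-fractal set $S\subseteq I^y_{(k,j)}$, $$\mathbb{P}^{\xi^x,\xi^y}_p\big[\mathcal{R}_k(S,I)\text{ contains no }k\text{-fractal set}\big]\le(i_1-i_0+1)\max\{u_k(p),v_k(p)\}.$$ (ii) If $i_1-i_0\ge1$, $\sum_{i=i_0}^{i_1}H^x_{(k,i)}\le1$, $I=\bigcup_{i=i_0}^{i_1}I_{(k,i)}$ and $S$ is any $k$-fractal set (not necessarily $k$-grouped), then $$\mathbb{P}^{\xi^x,\xi^y}_p\big[\mathcal{R}_k(S,I)\text{ contains no }k\text{-grouped }k\text{-fractal set}\big]\le(i_1-i_0+1)\max\{u_k(p),v_k(p)\}.$$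
   Context: $L=10^6$, $L_k=L^k$, $M_k=\{k\}\times\mathbb{Z}$, $I_{(k,i)}=[iL_k,(i+1)L_k)\cap\mathbb{Z}$; for $m=(k+1,i)$, $\mathcal{Q}_m=\{(k,iL+j):0\le j\le L-1\}$. For a sequence $\xi=(\xi_i)_{i\in\mathbb{Z}}$ of nonnegative integers define labels $H_m$: $H_{(0,i)}=\xi_i$; for $m\in M_{k+1}$, $H_m=0$ if all $m'\in\mathcal{Q}_m$ are good, $H_m=H_{m_1}-1$ if $m_1$ is the unique bad element of $\mathcal{Q}_m$, and $H_m=1+\sum_{i=1}^rH_{m_i}$ if $m_1,\dots,m_r$ ($r\ge2$) are the bad elements of $\mathcal{Q}_m$; $m$ is good iff $H_m=0$, bad otherwise. $H^x_m,H^y_m$ are these labels computed from $\xi^x$, $\xi^y$; $I^x_m,I^y_m$ denote $I_m$ viewed horizontally/vertically. $\mathbb{P}^{\xi^x,\xi^y}_p$: independent bond percolation on $\mathbb{Z}^2$, edge $\{(i,j),(i+1,j)\}$ open with probability $p^{\xi^x_i+1}$, edge $\{(i,j),(i,j+1)\}$ open with probability $p^{\xi^y_j+1}$. For $S\subseteq\mathbb{Z}$, $Z_k(S)=\{m\in M_k:I_m\cap S\neq\emptyset\}$; $Z\prec Z'$ means $(k,i)\in Z,(k,j)\in Z'\Rightarrow i<j$; $S_1,\dots,S_n$ is $k$-ordered if $Z_k(S_1)\prec\dots\prec Z_k(S_n)$. $S$ is $k$-good if all $m\in Z_k(S)$ have $H^y_m=0$. $\{i\}$ is $0$-fractal iff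 $\xi^y_i=0$; for $k\ge1$, $S$ is $k$-fractal if $S=S_1\cup\dots\cup S_{2^{10}}$ with $S$ $k$-good, $(S_1,\dots,S_{2^{10}})$ $(k-1)$-ordered and each $S_i$ $(k-1)$-fractal. A $k$-fractal $S$ is $k$-grouped if $S\subseteq I_m$ for some $m\in M_k$. For a rectangle $R=[a,b)\times[c,d)$ (vertices $[a,b]\times[c,d]\cap\mathbb{Z}^2$, edges $\{z,w\}$, $|z-w|=1$, $z\in[a,b]\times[c,d]$, $w\in[a,b)\times[c,d)$), $\mathcal{R}(S,R)$ is the set of $y$ with $(b,y)\in\{b\}\times[c,d]$ joined to $\{a\}\times S$ by an open path in $R$. For a finite interval $I=[a,b)$, $\mathcal{R}_k(S,I)=\bigcup_{m'\in Z_k(S)}\mathcal{R}(S\cap I^y_{m'},I\times I^y_{m'})$. $u_k(p)=\sup\mathbb{P}^{\xi^x,\xi^y}_p[\mathcal{R}_k(S,I^x_m)$ contains no $k$-grouped $k$-fractal set$]$ over $S,m\in M_k,\xi^x,\xi^y$ with $S$ $k$-fractal and $H^x_m=0$. $v_k(p)=\sup\mathbb{P}^{\xi^x,\xi^y}_p[\mathcal{R}_k(S,I^x_m)$ contains no $k$-fractal set$]$ over $h\ge1$, $S$, $m\in M_k$, $\xi^x,\xi^y$ with $H^x_m=h$ and $S$ the union of a $k$-ordered family of $2^{4(h-1)}$ $k$-fractal sets. *)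

theory Defs
  imports "HOL-Probability.Probability"
begin

definition LL :: int where "LL = 10^6"

definition Iv :: "nat \<Rightarrow> int \<Rightarrow> int set" where
  "Iv k i = {i * LL^k ..< (i+1) * LL^k}"

text \<open>Labels H_(k,i) computed from a sequence xi; good iff label is 0.\<close>
fun H :: "(int \<Rightarrow> nat) \<Rightarrow> nat \<Rightarrow> int \<Rightarrow> nat" where
  "H xi 0 i = xi i"
| "H xi (Suc k) i =
     (let bad = {j \<in> {0..<LL}. H xi k (i * LL + j) \<noteq> 0} in
      if bad = {} then 0
      else if card bad = 1 then H xi k (i * LL + the_elem bad) - 1
      else 1 + (\<Sum>j\<in>bad. H xi k (i * LL + j)))"

definition Zk :: "nat \<Rightarrow> int set \<Rightarrow> int set" where
  "Zk k S = {i. Iv k i \<inter> S \<noteq> {}}"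

definition prec :: "int set \<Rightarrow> int set \<Rightarrow> bool" where
  "prec Z Z' \<longleftrightarrow> (\<forall>i\<in>Z. \<forall>j\<in>Z'. i < j)"

definition k_ordered :: "nat \<Rightarrow> int set list \<Rightarrow> bool" where
  "k_ordered k Ss \<longleftrightarrow> (\<forall>a. Suc a < length Ss \<longrightarrow> prec (Zk k (Ss ! a)) (Zk k (Ss ! Suc a)))"

definition k_good :: "(int \<Rightarrow> nat) \<Rightarrow> nat \<Rightarrow> int set \<Rightarrow> bool" where
  "k_good xiy k S \<longleftrightarrow> (\<forall>m\<in>Zk k S. H xiy k m = 0)"

primrec fractal :: "(int \<Rightarrow> nat) \<Rightarrow> nat \<Rightarrow> int set \<Rightarrow> bool" where
  "fractal xiy 0 S \<longleftrightarrow> (\<exists>i. S = {i} \<and> xiy i = 0)"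
| "fractal xiy (Suc k) S \<longleftrightarrow>
     (\<exists>Ss. length Ss = 2^10 \<and> S = \<Union>(set Ss) \<and> k_good xiy (Suc k) S
          \<and> k_ordered k Ss \<and> (\<forall>T\<in>set Ss. fractal xiy k T))"

definition grouped :: "nat \<Rightarrow> int set \<Rightarrow> bool" where
  "grouped k S \<longleftrightarrow> (\<exists>i. S \<subseteq> Iv k i)"

type_synonym edge = "(int \<times> int) \<times> bool"

fun endpoints :: "edge \<Rightarrow> (int \<times> int) set" where
  "endpoints ((x,y),True) = {(x,y),(x+1,y)}"
| "endpoints ((x,y),False) = {(x,y),(x,y+1)}"

fun edge_prob :: "(int \<Rightarrow> nat) \<Rightarrow> (int \<Rightarrow> nat) \<Rightarrow> real \<Rightarrow> edge \<Rightarrow> real" where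
  "edge_prob xix xiy p ((x,y),True) = p ^ (xix x + 1)"
| "edge_prob xix xiy p ((x,y),False) = p ^ (xiy y + 1)"

text \<open>Independent bond percolation: configuration \<omega> :: edge \<Rightarrow> bool (True = open).\<close>
definition perc :: "(int \<Rightarrow> nat) \<Rightarrow> (int \<Rightarrow> nat) \<Rightarrow> real \<Rightarrow> (edge \<Rightarrow> bool) measure" where
  "perc xix xiy p = (\<Pi>\<^sub>M e\<in>UNIV. measure_pmf (bernoulli_pmf (edge_prob xix xiy p e)))"

definition Pperc :: "(int \<Rightarrow> nat) \<Rightarrow> (int \<Rightarrow> nat) \<Rightarrow> real \<Rightarrow> ((edge \<Rightarrow> bool) \<Rightarrow> bool) \<Rightarrow> real" where
  "Pperc xix xiy p E = measure (perc xix xiy p) {\<omega> \<in> space (perc xix xiy p). E \<omega>}"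

definition edge_in_rect :: "int \<Rightarrow> int \<Rightarrow> int \<Rightarrow> int \<Rightarrow> edge \<Rightarrow> bool" where
  "edge_in_rect a b c d e \<longleftrightarrow>
     (\<exists>z w. endpoints e = {z, w} \<and> fst z \<in> {a..b} \<and> snd z \<in> {c..d}
            \<and> fst w \<in> {a..<b} \<and> snd w \<in> {c..<d})"

definition open_step :: "(edge \<Rightarrow> bool) \<Rightarrow> int \<Rightarrow> int \<Rightarrow> int \<Rightarrow> int \<Rightarrow> int \<times> int \<Rightarrow> int \<times> int \<Rightarrow> bool" where
  "open_step \<omega> a b c d u v \<longleftrightarrow> (\<exists>e. \<omega> e \<and> edge_in_rect a b c d e \<and> endpoints e = {u, v})"

definition Rset :: "(edge \<Rightarrow> bool) \<Rightarrow> int set \<Rightarrow> int \<Rightarrow> int \<Rightarrow> int \<Rightarrow> int \<Rightarrow> int set" where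
  "Rset \<omega> S a b c d = {y \<in> {c..d}. \<exists>s\<in>S. (open_step \<omega> a b c d)\<^sup>*\<^sup>* (a, s) (b, y)}"

definition Rk :: "(edge \<Rightarrow> bool) \<Rightarrow> nat \<Rightarrow> int set \<Rightarrow> int \<Rightarrow> int \<Rightarrow> int set" where
  "Rk \<omega> k S a b = (\<Union>j\<in>Zk k S. Rset \<omega> (S \<inter> Iv k j) a b (j * LL^k) ((j+1) * LL^k))"

definition u :: "nat \<Rightarrow> real \<Rightarrow> real" where
  "u k p = Sup {Pperc xix xiy p (\<lambda>\<omega>. \<not> (\<exists>T. T \<subseteq> Rk \<omega> k S (i * LL^k) ((i+1) * LL^k)
                                          \<and> grouped k T \<and> fractal xiy k T))
               | xix xiy S i. fractal xiy k S \<and> H xix k i = 0}"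

definition v :: "nat \<Rightarrow> real \<Rightarrow> real" where
  "v k p = Sup {Pperc xix xiy p (\<lambda>\<omega>. \<not> (\<exists>T. T \<subseteq> Rk \<omega> k S (i * LL^k) ((i+1) * LL^k)
                                          \<and> fractal xiy k T))
               | xix xiy S i h Ss. h \<ge> 1 \<and> H xix k i = h \<and> length Ss = 2^(4*(h-1))
                   \<and> k_ordered k Ss \<and> (\<forall>T\<in>set Ss. fractal xiy k T) \<and> S = \<Union>(set Ss)}"

end

theory Submission
  imports Defs
begin

text \<open>
  The columns I_(k,i0), ..., I_(k,i1) are crossed one after the other. Starting from T_0 = S, in
  column i0 + t we look for a k-fractal set T_(t+1) inside R_k(T_t, I_(k,i0+t)), required to be
  k-grouped if the column is good. Since open paths concatenate, R_k(T_t, I_(k,i0+t)) lies in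
  R_k(S, [i0 L^k, (i0+t+1) L^k)), so if every step succeeds the last set is the one sought.
  Whether the exploration reaches a given T_t depends only on edges left of column i0 + t, and the
  next step only on edges inside it; by independence the step fails with probability at most
  u_k(p) for a good column and at most v_k(p) for a column with label 1 (take h = 1, the family
  consisting of T_t alone). A union bound over the i1 - i0 + 1 columns gives the estimate. In (ii)
  two or more column labels sum to at most 1, so some column is good and the final set is grouped.
\<close>

lemma (in prob_space) prob_UN_Int_disjoint_le:
  assumes "finite R" and "\<And>x. x \<in> R \<Longrightarrow> B x \<in> events" and "\<And>x. x \<in> R \<Longrightarrow> A x \<in> events"
    and "disjoint_family_on B R" and "0 \<le> m"
    and "\<And>x. x \<in> R \<Longrightarrow> prob (B x \<inter> A x) \<le> prob (B x) * m"
  shows "prob (\<Union>x\<in>R. B x \<inter> A x) \<le> m"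
proof -
  have "disjoint_family_on (\<lambda>x. B x \<inter> A x) R"
    using \<open>disjoint_family_on B R\<close> unfolding disjoint_family_on_def by blast
  then have "prob (\<Union>x\<in>R. B x \<inter> A x) = (\<Sum>x\<in>R. prob (B x \<inter> A x))"
    using assms(1-3) by (intro finite_measure_finite_Union) auto
  also have "\<dots> \<le> (\<Sum>x\<in>R. prob (B x) * m)"
    by (intro sum_mono assms(6))
  also have "\<dots> = prob (\<Union>x\<in>R. B x) * m"
    using assms(1,2,4) by (subst finite_measure_finite_Union) (auto simp: sum_distrib_right)
  also have "\<dots> \<le> m"
    using \<open>0 \<le> m\<close> by (intro mult_left_le_one_le) auto
  finally show ?thesis .
qed

section \<open>Events determined by finitely many independent coordinates\<close>

definition depends_only_on :: "'e set \<Rightarrow> (('e \<Rightarrow> 'a) \<Rightarrow> 'b) \<Rightarrow> bool" where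
  "depends_only_on J f \<longleftrightarrow> (\<forall>\<omega> \<omega>'. (\<forall>e\<in>J. \<omega> e = \<omega>' e) \<longrightarrow> f \<omega> = f \<omega>')"

lemma depends_only_onI:
  "(\<And>\<omega> \<omega>'. (\<And>e. e \<in> J \<Longrightarrow> \<omega> e = \<omega>' e) \<Longrightarrow> f \<omega> = f \<omega>') \<Longrightarrow> depends_only_on J f"
  unfolding depends_only_on_def by blast

lemma depends_only_onD:
  "depends_only_on J f \<Longrightarrow> (\<And>e. e \<in> J \<Longrightarrow> \<omega> e = \<omega>' e) \<Longrightarrow> f \<omega> = f \<omega>'"
  unfolding depends_only_on_def by blast

lemma depends_only_on_mono: "depends_only_on J f \<Longrightarrow> J \<subseteq> J' \<Longrightarrow> depends_only_on J' f"
  unfolding depends_only_on_def by blast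

lemma depends_only_on_comp: "depends_only_on J f \<Longrightarrow> depends_only_on J (\<lambda>\<omega>. g (f \<omega>))"
  unfolding depends_only_on_def by metis

lemma sets_PiM_pmf_finite:
  fixes q :: "'e \<Rightarrow> 'a::countable pmf"
  assumes J: "finite J" and A: "A \<subseteq> space (\<Pi>\<^sub>M e\<in>J. measure_pmf (q e))"
  shows "A \<in> sets (\<Pi>\<^sub>M e\<in>J. measure_pmf (q e))"
proof -
  have space: "space (\<Pi>\<^sub>M e\<in>J. measure_pmf (q e)) = (\<Pi>\<^sub>E e\<in>J. UNIV)"
    by (simp add: space_PiM)
  have "countable (Pi\<^sub>E J (\<lambda>_. UNIV :: 'a set))"
    using J by (intro countable_PiE) auto
  then have "countable A"
    using A unfolding space by (rule countable_subset[rotated])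
  moreover have "(\<Pi>\<^sub>E e\<in>J. {f e}) \<in> sets (\<Pi>\<^sub>M e\<in>J. measure_pmf (q e))" for f
    using J by (intro sets_PiM_I_finite) auto
  ultimately have "(\<Union>f\<in>A. \<Pi>\<^sub>E e\<in>J. {f e}) \<in> sets (\<Pi>\<^sub>M e\<in>J. measure_pmf (q e))"
    by (intro sets.countable_UN'')
  moreover have "(\<Pi>\<^sub>E e\<in>J. {f e}) = {f}" if "f \<in> A" for f
    using that A unfolding space by (intro PiE_singleton) (auto simp: PiE_def)
  ultimately show ?thesis
    by simp
qed

lemma PiM_pmf_event_eq_restrict_vimage:
  fixes q :: "'e \<Rightarrow> 'a::countable pmf"
  defines "M \<equiv> \<Pi>\<^sub>M e\<in>UNIV. measure_pmf (q e)"
  assumes J: "finite J" and E: "depends_only_on J E"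
  obtains A where "A \<in> sets (\<Pi>\<^sub>M e\<in>J. measure_pmf (q e))"
    and "{\<omega> \<in> space M. E \<omega>} = (\<lambda>\<omega>. restrict \<omega> J) -` A \<inter> space M"
proof
  let ?A = "(\<lambda>\<omega>. restrict \<omega> J) ` {\<omega> \<in> space M. E \<omega>}"
  show "?A \<in> sets (\<Pi>\<^sub>M e\<in>J. measure_pmf (q e))"
    by (rule sets_PiM_pmf_finite[OF J]) (auto simp: M_def space_PiM)
  have "E \<omega>" if "restrict \<omega> J = restrict \<omega>' J" and "E \<omega>'" for \<omega> \<omega>'
  proof (rule depends_only_onD[OF E, of \<omega>' \<omega>, THEN iffD1])
    show "\<omega>' e = \<omega> e" if "e \<in> J" for e
      using fun_cong[OF \<open>restrict \<omega> J = restrict \<omega>' J\<close>, of e] that by simp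
  qed (fact \<open>E \<omega>'\<close>)
  then show "{\<omega> \<in> space M. E \<omega>} = (\<lambda>\<omega>. restrict \<omega> J) -` ?A \<inter> space M"
    by (auto simp: image_iff)
qed

lemma sets_PiM_pmf_depends_only_on:
  fixes q :: "'e \<Rightarrow> 'a::countable pmf"
  assumes "finite J" and "depends_only_on J E"
  shows "{\<omega> \<in> space (\<Pi>\<^sub>M e\<in>UNIV. measure_pmf (q e)). E \<omega>} \<in> sets (\<Pi>\<^sub>M e\<in>UNIV. measure_pmf (q e))"
proof -
  obtain A where A: "A \<in> sets (\<Pi>\<^sub>M e\<in>J. measure_pmf (q e))"
    and E: "{\<omega> \<in> space (\<Pi>\<^sub>M e\<in>UNIV. measure_pmf (q e)). E \<omega>}
              = (\<lambda>\<omega>. restrict \<omega> J) -` A \<inter> space (\<Pi>\<^sub>M e\<in>UNIV. measure_pmf (q e))"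
    using PiM_pmf_event_eq_restrict_vimage[OF assms] .
  have "(\<lambda>\<omega>. restrict \<omega> J) \<in> measurable (\<Pi>\<^sub>M e\<in>UNIV. measure_pmf (q e)) (\<Pi>\<^sub>M e\<in>J. measure_pmf (q e))"
    by (rule measurable_restrict_subset) simp
  then show ?thesis
    unfolding E using A by (rule measurable_sets)
qed

lemma (in product_prob_space) indep_vars_coordinates:
  "prob_space.indep_vars (\<Pi>\<^sub>M i\<in>I. M i) M (\<lambda>i \<omega>. \<omega> i) I"
proof (cases "I = {}")
  case True
  then show ?thesis
    unfolding P.indep_vars_def P.indep_sets_def by simp
next
  case False
  have "distr (\<Pi>\<^sub>M i\<in>I. M i) (\<Pi>\<^sub>M i\<in>I. M i) (\<lambda>\<omega>. restrict \<omega> I) = distr (\<Pi>\<^sub>M i\<in>I. M i) (\<Pi>\<^sub>M i\<in>I. M i) (\<lambda>\<omega>. \<omega>)"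
    by (rule distr_cong) (auto simp: space_PiM PiE_def)
  also have "\<dots> = (\<Pi>\<^sub>M i\<in>I. distr (\<Pi>\<^sub>M i\<in>I. M i) (M i) (\<lambda>\<omega>. \<omega> i))"
    by (simp add: PiM_component cong: PiM_cong)
  finally show ?thesis
    using False by (subst P.indep_vars_iff_distr_eq_PiM') (auto intro: measurable_component_singleton)
qed

lemma PiM_pmf_prob_conj_eq_mult:
  fixes q :: "'e \<Rightarrow> 'a::countable pmf"
  defines "M \<equiv> \<Pi>\<^sub>M e\<in>UNIV. measure_pmf (q e)"
  assumes J1: "finite J1" and J2: "finite J2" and disj: "J1 \<inter> J2 = {}"
    and E1: "depends_only_on J1 E1" and E2: "depends_only_on J2 E2"
  shows "measure M {\<omega> \<in> space M. E1 \<omega> \<and> E2 \<omega>}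
       = measure M {\<omega> \<in> space M. E1 \<omega>} * measure M {\<omega> \<in> space M. E2 \<omega>}"
proof -
  interpret product_prob_space "\<lambda>e. measure_pmf (q e)" UNIV
    by unfold_locales
  let ?gen = "\<lambda>J. sigma_sets (space M)
                  {(\<lambda>\<omega>. restrict (\<lambda>e. \<omega> e) J) -` A \<inter> space M | A. A \<in> sets (\<Pi>\<^sub>M e\<in>J. measure_pmf (q e))}"
  have "P.indep_var (\<Pi>\<^sub>M e\<in>J1. measure_pmf (q e)) (\<lambda>\<omega>. restrict (\<lambda>e. \<omega> e) J1)
                    (\<Pi>\<^sub>M e\<in>J2. measure_pmf (q e)) (\<lambda>\<omega>. restrict (\<lambda>e. \<omega> e) J2)"
    using disj by (intro P.indep_var_restrict[OF indep_vars_coordinates]) auto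
  then have indep: "P.indep_set (?gen J1) (?gen J2)"
    unfolding P.indep_var_eq M_def by blast
  obtain A1 where "A1 \<in> sets (\<Pi>\<^sub>M e\<in>J1. measure_pmf (q e))"
    and "{\<omega> \<in> space M. E1 \<omega>} = (\<lambda>\<omega>. restrict \<omega> J1) -` A1 \<inter> space M"
    using PiM_pmf_event_eq_restrict_vimage[OF J1 E1] unfolding M_def .
  then have "{\<omega> \<in> space M. E1 \<omega>} \<in> ?gen J1"
    by (intro sigma_sets.Basic) blast
  moreover obtain A2 where "A2 \<in> sets (\<Pi>\<^sub>M e\<in>J2. measure_pmf (q e))"
    and "{\<omega> \<in> space M. E2 \<omega>} = (\<lambda>\<omega>. restrict \<omega> J2) -` A2 \<inter> space M"
    using PiM_pmf_event_eq_restrict_vimage[OF J2 E2] unfolding M_def .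
  then have "{\<omega> \<in> space M. E2 \<omega>} \<in> ?gen J2"
    by (intro sigma_sets.Basic) blast
  ultimately have "measure M ({\<omega> \<in> space M. E1 \<omega>} \<inter> {\<omega> \<in> space M. E2 \<omega>})
                 = measure M {\<omega> \<in> space M. E1 \<omega>} * measure M {\<omega> \<in> space M. E2 \<omega>}"
    using indep unfolding P.indep_sets2_eq M_def by blast
  moreover have "{\<omega> \<in> space M. E1 \<omega>} \<inter> {\<omega> \<in> space M. E2 \<omega>} = {\<omega> \<in> space M. E1 \<omega> \<and> E2 \<omega>}"
    by blast
  ultimately show ?thesis
    by simp
qed

lemma prob_space_perc: "prob_space (perc xix xiy p)"
  unfolding perc_def by (rule prob_space_PiM) (rule prob_space_measure_pmf)

lemma sets_perc_depends_only_on: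
  "finite J \<Longrightarrow> depends_only_on J E \<Longrightarrow> {\<omega> \<in> space (perc xix xiy p). E \<omega>} \<in> sets (perc xix xiy p)"
  unfolding perc_def by (rule sets_PiM_pmf_depends_only_on)

lemma Pperc_conj_eq_mult:
  "finite J1 \<Longrightarrow> finite J2 \<Longrightarrow> J1 \<inter> J2 = {} \<Longrightarrow> depends_only_on J1 E1 \<Longrightarrow> depends_only_on J2 E2 \<Longrightarrow>
    Pperc xix xiy p (\<lambda>\<omega>. E1 \<omega> \<and> E2 \<omega>) = Pperc xix xiy p E1 * Pperc xix xiy p E2"
  unfolding Pperc_def perc_def by (rule PiM_pmf_prob_conj_eq_mult)

lemma Pperc_nonneg: "0 \<le> Pperc xix xiy p E"
  unfolding Pperc_def by simp

lemma Pperc_le_1: "Pperc xix xiy p E \<le> 1"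
  unfolding Pperc_def by (rule prob_space.prob_le_1[OF prob_space_perc])

lemma Pperc_mono:
  assumes "\<And>\<omega>. E1 \<omega> \<Longrightarrow> E2 \<omega>" and "{\<omega> \<in> space (perc xix xiy p). E2 \<omega>} \<in> sets (perc xix xiy p)"
  shows "Pperc xix xiy p E1 \<le> Pperc xix xiy p E2"
proof -
  interpret prob_space "perc xix xiy p"
    by (rule prob_space_perc)
  show ?thesis
    unfolding Pperc_def using assms by (intro finite_measure_mono) auto
qed

section \<open>Blocks and crossings\<close>

lemma LL_power_pos: "0 < LL ^ k"
  by (simp add: LL_def)

lemma mem_Iv_iff: "s \<in> Iv k i \<longleftrightarrow> s div LL ^ k = i"
proof -
  have L: "0 < LL ^ k"
    by (rule LL_power_pos)
  show ?thesis
  proof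
    assume "s \<in> Iv k i"
    then show "s div LL ^ k = i"
      by (intro int_div_pos_eq[of s "LL ^ k" i "s - LL ^ k * i"]) (auto simp: Iv_def algebra_simps)
  next
    assume "s div LL ^ k = i"
    moreover have "s div LL ^ k * LL ^ k + s mod LL ^ k = s"
      by (rule div_mult_mod_eq)
    moreover have "0 \<le> s mod LL ^ k" "s mod LL ^ k < LL ^ k"
      using L by auto
    ultimately show "s \<in> Iv k i"
      by (auto simp: Iv_def algebra_simps)
  qed
qed

lemma Zk_eq_image: "Zk k S = (\<lambda>s. s div LL ^ k) ` S"
  unfolding Zk_def by (auto simp: mem_Iv_iff)

lemma finite_Zk: "finite S \<Longrightarrow> finite (Zk k S)"
  by (simp add: Zk_eq_image)

lemma Zk_subset_iff: "Zk k S \<subseteq> Z \<longleftrightarrow> S \<subseteq> (\<Union>j\<in>Z. Iv k j)"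
  by (auto simp: Zk_eq_image mem_Iv_iff)

lemma grouped_iff_Zk: "grouped k S \<longleftrightarrow> (\<exists>j. Zk k S \<subseteq> {j})"
  unfolding grouped_def Zk_subset_iff by simp

lemma fractal_finite: "fractal xiy k S \<Longrightarrow> finite S"
  by (induction k arbitrary: S) auto

lemma edge_in_rect_coords:
  assumes "edge_in_rect a b c d e"
  shows "a \<le> fst (fst e) \<and> fst (fst e) < b \<and> c \<le> snd (fst e) \<and> snd (fst e) \<le> d"
proof -
  obtain x y dir where "e = ((x, y), dir)"
    by (metis prod.collapse)
  with assms show ?thesis
    by (cases dir) (auto simp: edge_in_rect_def doubleton_eq_iff)
qed

lemma finite_edge_in_rect: "finite {e. edge_in_rect a b c d e}"
proof (rule finite_subset)
  show "{e. edge_in_rect a b c d e} \<subseteq> ({a..<b} \<times> {c..d}) \<times> UNIV"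
    by (auto dest!: edge_in_rect_coords simp: mem_Times_iff)
qed simp

lemma edge_in_rect_widen:
  assumes "edge_in_rect a b c d e" and "a' \<le> a" and "b \<le> b'"
  shows "edge_in_rect a' b' c d e"
proof -
  from assms(1) obtain z w where "endpoints e = {z, w}" "fst z \<in> {a..b}" "snd z \<in> {c..d}"
    "fst w \<in> {a..<b}" "snd w \<in> {c..<d}"
    unfolding edge_in_rect_def by blast
  with assms(2,3) show ?thesis
    unfolding edge_in_rect_def by (intro exI[of _ z] exI[of _ w]) auto
qed

lemma corner_notin_edge_in_rect: "edge_in_rect a b c d ((x, y), dir) \<Longrightarrow> (b, d) \<notin> endpoints ((x, y), dir)"
  by (cases dir) (auto simp: edge_in_rect_def doubleton_eq_iff)

lemma open_path_widen:
  assumes "(open_step \<omega> a b c d)\<^sup>*\<^sup>* z w" and "a' \<le> a" and "b \<le> b'"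
  shows "(open_step \<omega> a' b' c d)\<^sup>*\<^sup>* z w"
  using assms(1)
proof (rule rtranclp_mono[THEN predicate2D, rotated])
  show "open_step \<omega> a b c d \<le> open_step \<omega> a' b' c d"
    using assms(2,3) edge_in_rect_widen unfolding open_step_def by blast
qed

lemma Rset_subset:
  assumes "S \<subseteq> {..<d}"
  shows "Rset \<omega> S a b c d \<subseteq> {c..<d}"
proof
  fix y assume "y \<in> Rset \<omega> S a b c d"
  then obtain s where "s \<in> S" and y: "y \<in> {c..d}" and path: "(open_step \<omega> a b c d)\<^sup>*\<^sup>* (a, s) (b, y)"
    unfolding Rset_def by blast
  \<comment> \<open>no edge of the rectangle touches its upper right corner\<close>
  have "y \<noteq> d"
    using path
  proof (cases rule: rtranclp.cases)
    case rtrancl_refl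
    then show ?thesis
      using \<open>s \<in> S\<close> assms by auto
  next
    case (rtrancl_into_rtrancl z)
    then obtain x' y' dir where "edge_in_rect a b c d ((x', y'), dir)" "(b, y) \<in> endpoints ((x', y'), dir)"
      unfolding open_step_def by (metis insertCI prod.collapse)
    then show ?thesis
      using corner_notin_edge_in_rect by blast
  qed
  with y show "y \<in> {c..<d}"
    by simp
qed

lemma Rset_depends_only_on:
  "depends_only_on {e. edge_in_rect a b c d e} (\<lambda>\<omega>. Rset \<omega> S a b c d)"
proof (rule depends_only_onI)
  fix \<omega> \<omega>' :: "edge \<Rightarrow> bool"
  assume "\<And>e. e \<in> {e. edge_in_rect a b c d e} \<Longrightarrow> \<omega> e = \<omega>' e"
  then have "open_step \<omega> a b c d = open_step \<omega>' a b c d"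
    unfolding open_step_def by (intro ext) (metis mem_Collect_eq)
  then show "Rset \<omega> S a b c d = Rset \<omega>' S a b c d"
    unfolding Rset_def by simp
qed

lemma Rk_subset_blocks: "Rk \<omega> k T a b \<subseteq> (\<Union>j\<in>Zk k T. Iv k j)"
proof
  fix y assume "y \<in> Rk \<omega> k T a b"
  then obtain j where j: "j \<in> Zk k T" and y: "y \<in> Rset \<omega> (T \<inter> Iv k j) a b (j * LL^k) ((j+1) * LL^k)"
    unfolding Rk_def by blast
  have "T \<inter> Iv k j \<subseteq> {..<(j+1) * LL^k}"
    by (auto simp: Iv_def)
  then have "y \<in> {j * LL^k..<(j+1) * LL^k}"
    using y by (rule subsetD[OF Rset_subset])
  then have "y \<in> Iv k j"
    by (simp add: Iv_def)
  with j show "y \<in> (\<Union>j\<in>Zk k T. Iv k j)"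
    by (rule UN_I)
qed

lemma Zk_subset_Rk:
  assumes "T' \<subseteq> Rk \<omega> k T a b"
  shows "Zk k T' \<subseteq> Zk k T"
  unfolding Zk_subset_iff using assms Rk_subset_blocks by (rule subset_trans)

lemma subset_Rk_same_column: "S \<subseteq> Rk \<omega> k S a a"
proof
  fix s assume s: "s \<in> S"
  let ?j = "s div LL^k"
  have "s \<in> Iv k ?j"
    by (simp add: mem_Iv_iff)
  with s have "?j \<in> Zk k S" and "s \<in> Rset \<omega> (S \<inter> Iv k ?j) a a (?j * LL^k) ((?j+1) * LL^k)"
    unfolding Zk_def Rset_def by (auto simp: Iv_def)
  then show "s \<in> Rk \<omega> k S a a"
    unfolding Rk_def by blast
qed

lemma Rk_trans:
  assumes T: "T \<subseteq> Rk \<omega> k T0 a b" and "a \<le> b" and "b \<le> c"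
  shows "Rk \<omega> k T b c \<subseteq> Rk \<omega> k T0 a c"
proof
  fix y assume "y \<in> Rk \<omega> k T b c"
  then obtain j s where j: "j \<in> Zk k T" and s: "s \<in> T \<inter> Iv k j" and y: "y \<in> {j * LL^k..(j+1) * LL^k}"
    and path2: "(open_step \<omega> b c (j * LL^k) ((j+1) * LL^k))\<^sup>*\<^sup>* (b, s) (c, y)"
    unfolding Rk_def Rset_def by blast
  from s T obtain j' where j': "j' \<in> Zk k T0"
    and s': "s \<in> Rset \<omega> (T0 \<inter> Iv k j') a b (j' * LL^k) ((j'+1) * LL^k)"
    unfolding Rk_def by blast
  \<comment> \<open>reachable heights never leave their row block, so s determines it\<close>
  have "T0 \<inter> Iv k j' \<subseteq> {..<(j'+1) * LL^k}"
    by (auto simp: Iv_def)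
  then have "s \<in> {j' * LL^k..<(j'+1) * LL^k}"
    using s' by (rule subsetD[OF Rset_subset])
  with s have "j' = j"
    by (simp add: mem_Iv_iff flip: Iv_def)
  with s' obtain s0 where s0: "s0 \<in> T0 \<inter> Iv k j"
    and path1: "(open_step \<omega> a b (j * LL^k) ((j+1) * LL^k))\<^sup>*\<^sup>* (a, s0) (b, s)"
    unfolding Rset_def by blast
  have "(open_step \<omega> a c (j * LL^k) ((j+1) * LL^k))\<^sup>*\<^sup>* (a, s0) (c, y)"
    using open_path_widen[OF path1 order_refl \<open>b \<le> c\<close>] open_path_widen[OF path2 \<open>a \<le> b\<close> order_refl]
    by (rule rtranclp_trans)
  with s0 y have "y \<in> Rset \<omega> (T0 \<inter> Iv k j) a c (j * LL^k) ((j+1) * LL^k)"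
    unfolding Rset_def by blast
  with j' \<open>j' = j\<close> show "y \<in> Rk \<omega> k T0 a c"
    unfolding Rk_def by blast
qed

definition block_edges :: "nat \<Rightarrow> int set \<Rightarrow> int \<Rightarrow> int \<Rightarrow> edge set" where
  "block_edges k Z a b = {e. \<exists>j\<in>Z. edge_in_rect a b (j * LL^k) ((j+1) * LL^k) e}"

lemma finite_block_edges:
  assumes "finite Z"
  shows "finite (block_edges k Z a b)"
proof -
  have "block_edges k Z a b = (\<Union>j\<in>Z. {e. edge_in_rect a b (j * LL^k) ((j+1) * LL^k) e})"
    unfolding block_edges_def by blast
  then show ?thesis
    using assms finite_edge_in_rect by simp
qed

lemma block_edges_mono:
  "Z \<subseteq> Z' \<Longrightarrow> a' \<le> a \<Longrightarrow> b \<le> b' \<Longrightarrow> block_edges k Z a b \<subseteq> block_edges k Z' a' b'"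
  unfolding block_edges_def using edge_in_rect_widen by blast

lemma block_edges_subset_columns: "block_edges k Z a b \<subseteq> {e. a \<le> fst (fst e) \<and> fst (fst e) < b}"
  unfolding block_edges_def by (auto dest: edge_in_rect_coords)

lemma block_edges_disjoint: "b \<le> a' \<Longrightarrow> block_edges k Z a b \<inter> block_edges k Z' a' b' = {}"
  using block_edges_subset_columns[of k Z a b] block_edges_subset_columns[of k Z' a' b'] by fastforce

lemma Rk_depends_only_on: "depends_only_on (block_edges k (Zk k T) a b) (\<lambda>\<omega>. Rk \<omega> k T a b)"
proof (rule depends_only_onI)
  fix \<omega> \<omega>' :: "edge \<Rightarrow> bool"
  assume agree: "\<And>e. e \<in> block_edges k (Zk k T) a b \<Longrightarrow> \<omega> e = \<omega>' e"
  have "Rset \<omega> (T \<inter> Iv k j) a b (j * LL^k) ((j+1) * LL^k) = Rset \<omega>' (T \<inter> Iv k j) a b (j * LL^k) ((j+1) * LL^k)"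
    if "j \<in> Zk k T" for j
  proof (rule depends_only_onD[OF Rset_depends_only_on])
    show "\<omega> e = \<omega>' e" if "e \<in> {e. edge_in_rect a b (j * LL^k) ((j+1) * LL^k) e}" for e
      using \<open>j \<in> Zk k T\<close> that by (intro agree) (auto simp: block_edges_def)
  qed
  then show "Rk \<omega> k T a b = Rk \<omega>' k T a b"
    unfolding Rk_def by simp
qed

lemma sets_perc_Rk:
  assumes "finite T"
  shows "{\<omega> \<in> space (perc xix xiy p). Q (Rk \<omega> k T a b)} \<in> sets (perc xix xiy p)"
  using finite_block_edges[OF finite_Zk[OF assms]] depends_only_on_comp[OF Rk_depends_only_on]
  by (rule sets_perc_depends_only_on)

section \<open>Crossing the columns one at a time\<close>

lemma Pperc_no_grouped_fractal_le_u:
  assumes "fractal xiy k S" and "H xix k i = 0"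
  shows "Pperc xix xiy p (\<lambda>\<omega>. \<not> (\<exists>T. T \<subseteq> Rk \<omega> k S (i * LL^k) ((i+1) * LL^k) \<and> grouped k T \<and> fractal xiy k T))
         \<le> u k p"
  unfolding u_def using assms
  by (intro cSup_upper CollectI exI[of _ xix] exI[of _ xiy] exI[of _ S] exI[of _ i])
     (auto intro!: bdd_aboveI[of _ 1] Pperc_le_1)

lemma Pperc_no_fractal_le_v:
  assumes "fractal xiy k S" and "H xix k i = 1"
  shows "Pperc xix xiy p (\<lambda>\<omega>. \<not> (\<exists>T. T \<subseteq> Rk \<omega> k S (i * LL^k) ((i+1) * LL^k) \<and> fractal xiy k T))
         \<le> v k p"
  unfolding v_def using assms
  by (intro cSup_upper CollectI exI[of _ xix] exI[of _ xiy] exI[of _ S] exI[of _ i] exI[of _ 1] exI[of _ "[S]"])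
     (auto simp: k_ordered_def intro!: bdd_aboveI[of _ 1] Pperc_le_1)

context
  fixes xix xiy :: "int \<Rightarrow> nat" and k :: nat
begin

definition crossing_target :: "int \<Rightarrow> int set \<Rightarrow> bool" where
  "crossing_target i T \<longleftrightarrow> fractal xiy k T \<and> (H xix k i = 0 \<longrightarrow> grouped k T)"

definition cross_column :: "(edge \<Rightarrow> bool) \<Rightarrow> int \<Rightarrow> int set \<Rightarrow> int set option" where
  "cross_column \<omega> i T =
     (if \<exists>T'. T' \<subseteq> Rk \<omega> k T (i * LL^k) ((i+1) * LL^k) \<and> crossing_target i T'
      then Some (SOME T'. T' \<subseteq> Rk \<omega> k T (i * LL^k) ((i+1) * LL^k) \<and> crossing_target i T')
      else None)"

fun explore :: "int \<Rightarrow> int set \<Rightarrow> (edge \<Rightarrow> bool) \<Rightarrow> nat \<Rightarrow> int set option" where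
  "explore i0 S \<omega> 0 = Some S"
| "explore i0 S \<omega> (Suc t) = Option.bind (explore i0 S \<omega> t) (cross_column \<omega> (i0 + int t))"

lemma cross_column_eq_None_iff:
  "cross_column \<omega> i T = None \<longleftrightarrow> \<not> (\<exists>T'. T' \<subseteq> Rk \<omega> k T (i * LL^k) ((i+1) * LL^k) \<and> crossing_target i T')"
  by (simp add: cross_column_def)

lemma cross_column_SomeD:
  assumes "cross_column \<omega> i T = Some T'"
  shows "T' \<subseteq> Rk \<omega> k T (i * LL^k) ((i+1) * LL^k) \<and> crossing_target i T'"
proof -
  have ex: "\<exists>T'. T' \<subseteq> Rk \<omega> k T (i * LL^k) ((i+1) * LL^k) \<and> crossing_target i T'"
  proof (rule ccontr)
    assume "\<not> (\<exists>T'. T' \<subseteq> Rk \<omega> k T (i * LL^k) ((i+1) * LL^k) \<and> crossing_target i T')"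
    with assms show False
      by (simp add: cross_column_def)
  qed
  with assms have "T' = (SOME T'. T' \<subseteq> Rk \<omega> k T (i * LL^k) ((i+1) * LL^k) \<and> crossing_target i T')"
    by (simp add: cross_column_def)
  then show ?thesis
    using someI_ex[OF ex] by simp
qed

lemma Zk_explore_subset: "explore i0 S \<omega> t = Some T \<Longrightarrow> Zk k T \<subseteq> Zk k S"
proof (induction t arbitrary: T)
  case 0
  then show ?case
    by simp
next
  case (Suc t)
  then obtain T0 where T0: "explore i0 S \<omega> t = Some T0" and step: "cross_column \<omega> (i0 + int t) T0 = Some T"
    by (auto simp: bind_eq_Some_conv)
  have "Zk k T \<subseteq> Zk k T0"
    by (rule Zk_subset_Rk[OF conjunct1[OF cross_column_SomeD[OF step]]])
  then show ?case
    using Suc.IH[OF T0] by (rule subset_trans)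
qed

lemma explore_invariant:
  assumes S: "fractal xiy k S" and "explore i0 S \<omega> t = Some T"
  shows "fractal xiy k T \<and> T \<subseteq> Rk \<omega> k S (i0 * LL^k) ((i0 + int t) * LL^k)
           \<and> ((\<exists>i\<in>{i0..<i0 + int t}. H xix k i = 0) \<longrightarrow> grouped k T)"
  using assms(2)
proof (induction t arbitrary: T)
  case 0
  then show ?case
    using S subset_Rk_same_column by auto
next
  case (Suc t)
  let ?i = "i0 + int t"
  from Suc.prems obtain T0 where T0: "explore i0 S \<omega> t = Some T0" and step: "cross_column \<omega> ?i T0 = Some T"
    by (auto simp: bind_eq_Some_conv)
  note IH = Suc.IH[OF T0]
  have T: "T \<subseteq> Rk \<omega> k T0 (?i * LL^k) ((?i + 1) * LL^k)" and target: "crossing_target ?i T"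
    using cross_column_SomeD[OF step] by auto
  have "i0 * LL^k \<le> ?i * LL^k" and "?i * LL^k \<le> (?i + 1) * LL^k"
    using LL_power_pos[of k] by simp_all
  with IH have "Rk \<omega> k T0 (?i * LL^k) ((?i + 1) * LL^k) \<subseteq> Rk \<omega> k S (i0 * LL^k) ((?i + 1) * LL^k)"
    by (intro Rk_trans) auto
  with T have reach: "T \<subseteq> Rk \<omega> k S (i0 * LL^k) ((i0 + int (Suc t)) * LL^k)"
    unfolding of_nat_Suc add.assoc[symmetric] add.commute[of 1] by (rule subset_trans)
  have "grouped k T" if "\<exists>i\<in>{i0..<i0 + int (Suc t)}. H xix k i = 0"
  proof (cases "H xix k ?i = 0")
    case True
    with target show ?thesis
      by (simp add: crossing_target_def)
  next
    case False
    with that have "\<exists>i\<in>{i0..<?i}. H xix k i = 0"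
      by (metis atLeastLessThan_iff int_ops(4) add.assoc zless_add1_eq)
    with IH obtain j where "Zk k T0 \<subseteq> {j}"
      by (auto simp: grouped_iff_Zk)
    with Zk_subset_Rk[OF T] show ?thesis
      by (auto simp: grouped_iff_Zk)
  qed
  with reach target show ?case
    by (simp add: crossing_target_def)
qed

lemma cross_column_depends_only_on:
  assumes "Zk k T \<subseteq> Z"
  shows "depends_only_on (block_edges k Z (i * LL^k) ((i+1) * LL^k)) (\<lambda>\<omega>. cross_column \<omega> i T)"
proof -
  have "depends_only_on (block_edges k Z (i * LL^k) ((i+1) * LL^k)) (\<lambda>\<omega>. Rk \<omega> k T (i * LL^k) ((i+1) * LL^k))"
    using Rk_depends_only_on block_edges_mono[OF assms order_refl order_refl] by (rule depends_only_on_mono)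
  from depends_only_on_comp[OF this,
      where g = "\<lambda>R. if \<exists>T'. T' \<subseteq> R \<and> crossing_target i T' then Some (SOME T'. T' \<subseteq> R \<and> crossing_target i T') else None"]
  show ?thesis
    unfolding cross_column_def .
qed

lemma explore_depends_only_on:
  "depends_only_on (block_edges k (Zk k S) (i0 * LL^k) ((i0 + int t) * LL^k)) (\<lambda>\<omega>. explore i0 S \<omega> t)"
proof (induction t)
  case 0
  show ?case
    by (simp add: depends_only_on_def)
next
  case (Suc t)
  let ?i = "i0 + int t"
  show ?case
  proof (rule depends_only_onI)
    fix \<omega> \<omega>' :: "edge \<Rightarrow> bool"
    assume agree: "\<And>e. e \<in> block_edges k (Zk k S) (i0 * LL^k) ((i0 + int (Suc t)) * LL^k) \<Longrightarrow> \<omega> e = \<omega>' e"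
    have "block_edges k (Zk k S) (i0 * LL^k) (?i * LL^k) \<subseteq> block_edges k (Zk k S) (i0 * LL^k) ((i0 + int (Suc t)) * LL^k)"
      and "block_edges k (Zk k S) (?i * LL^k) ((?i + 1) * LL^k) \<subseteq> block_edges k (Zk k S) (i0 * LL^k) ((i0 + int (Suc t)) * LL^k)"
      using LL_power_pos[of k] by (intro block_edges_mono; simp add: add.assoc)+
    note past = subsetD[OF this(1)] and column = subsetD[OF this(2)]
    have same: "explore i0 S \<omega> t = explore i0 S \<omega>' t"
      by (rule depends_only_onD[OF Suc.IH]) (rule agree[OF past])
    show "explore i0 S \<omega> (Suc t) = explore i0 S \<omega>' (Suc t)"
    proof (cases "explore i0 S \<omega> t")
      case None
      with same show ?thesis
        by simp
    next
      case (Some T)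
      have "cross_column \<omega> ?i T = cross_column \<omega>' ?i T"
        by (rule depends_only_onD[OF cross_column_depends_only_on[OF Zk_explore_subset[OF Some]]])
           (rule agree[OF column])
      with Some same show ?thesis
        by simp
    qed
  qed
qed

lemma sets_perc_explore:
  assumes "finite S"
  shows "{\<omega> \<in> space (perc xix xiy p). Q (explore i0 S \<omega> t)} \<in> sets (perc xix xiy p)"
  using finite_block_edges[OF finite_Zk[OF assms]] depends_only_on_comp[OF explore_depends_only_on]
  by (rule sets_perc_depends_only_on)

lemma Pperc_cross_column_fails_le:
  assumes "fractal xiy k T" and "H xix k i \<le> 1"
  shows "Pperc xix xiy p (\<lambda>\<omega>. cross_column \<omega> i T = None) \<le> max (u k p) (v k p)"
proof (cases "H xix k i = 0")
  case True
  then have "Pperc xix xiy p (\<lambda>\<omega>. cross_column \<omega> i T = None) \<le> u k p"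
    using Pperc_no_grouped_fractal_le_u[OF assms(1) True, of p]
    by (simp add: cross_column_eq_None_iff crossing_target_def conj_commute)
  then show ?thesis
    by (simp add: le_max_iff_disj)
next
  case False
  with assms(2) have "H xix k i = 1"
    by simp
  with False have "Pperc xix xiy p (\<lambda>\<omega>. cross_column \<omega> i T = None) \<le> v k p"
    using Pperc_no_fractal_le_v[OF assms(1), of xix i p]
    by (simp add: cross_column_eq_None_iff crossing_target_def)
  then show ?thesis
    by (simp add: le_max_iff_disj)
qed

lemma Pperc_explore_reaches_then_stops_le:
  assumes S: "fractal xiy k S" and H: "H xix k (i0 + int t) \<le> 1"
  shows "Pperc xix xiy p (\<lambda>\<omega>. explore i0 S \<omega> t = Some T \<and> cross_column \<omega> (i0 + int t) T = None)
         \<le> Pperc xix xiy p (\<lambda>\<omega>. explore i0 S \<omega> t = Some T) * max (u k p) (v k p)"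
proof (cases "\<exists>\<omega>. explore i0 S \<omega> t = Some T")
  case True
  then obtain \<omega> where "explore i0 S \<omega> t = Some T" ..
  then have "fractal xiy k T" and "Zk k T \<subseteq> Zk k S"
    using explore_invariant[OF S] Zk_explore_subset by blast+
  have fin: "finite (Zk k S)"
    using finite_Zk[OF fractal_finite[OF S]] .
  \<comment> \<open>reaching T only uses the columns left of column i0 + t, stopping there only uses column i0 + t\<close>
  have "Pperc xix xiy p (\<lambda>\<omega>. explore i0 S \<omega> t = Some T \<and> cross_column \<omega> (i0 + int t) T = None)
      = Pperc xix xiy p (\<lambda>\<omega>. explore i0 S \<omega> t = Some T) * Pperc xix xiy p (\<lambda>\<omega>. cross_column \<omega> (i0 + int t) T = None)"
    by (rule Pperc_conj_eq_mult[OF finite_block_edges[OF fin] finite_block_edges[OF fin]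
          block_edges_disjoint[OF order_refl]
          depends_only_on_comp[OF explore_depends_only_on, where g = "\<lambda>x. x = Some T"]
          depends_only_on_comp[OF cross_column_depends_only_on[OF \<open>Zk k T \<subseteq> Zk k S\<close>],
            where g = "\<lambda>x. x = None"]])
  also have "\<dots> \<le> Pperc xix xiy p (\<lambda>\<omega>. explore i0 S \<omega> t = Some T) * max (u k p) (v k p)"
    using Pperc_cross_column_fails_le[OF \<open>fractal xiy k T\<close> H] by (intro mult_left_mono Pperc_nonneg)
  finally show ?thesis .
qed (simp add: Pperc_def)

lemma Pperc_explore_stops_le:
  assumes S: "fractal xiy k S" and H: "H xix k (i0 + int t) \<le> 1"
  shows "Pperc xix xiy p (\<lambda>\<omega>. explore i0 S \<omega> t \<noteq> None \<and> explore i0 S \<omega> (Suc t) = None)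
         \<le> max (u k p) (v k p)"
proof -
  interpret P: prob_space "perc xix xiy p"
    by (rule prob_space_perc)
  define Ts where "Ts = Pow (\<Union>j\<in>Zk k S. Iv k j)"
  define B where "B T = {\<omega> \<in> space (perc xix xiy p). explore i0 S \<omega> t = Some T}" for T
  define A where "A T = {\<omega> \<in> space (perc xix xiy p). cross_column \<omega> (i0 + int t) T = None}" for T
  have finS: "finite S"
    using S by (rule fractal_finite)
  have "finite Ts"
    unfolding Ts_def using finite_Zk[OF finS] by (simp add: Iv_def)
  moreover have "B T \<in> P.events" for T
    unfolding B_def by (rule sets_perc_explore[OF finS])
  moreover have "A T \<in> P.events" if "T \<in> Ts" for T
  proof -
    have "Zk k T \<subseteq> Zk k S"
      using that unfolding Ts_def Zk_subset_iff by simp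
    then show ?thesis
      unfolding A_def by (rule sets_perc_depends_only_on[OF finite_block_edges[OF finite_Zk[OF finS]]
          depends_only_on_comp[OF cross_column_depends_only_on, where g = "\<lambda>x. x = None"]])
  qed
  moreover have "disjoint_family_on B Ts"
    unfolding disjoint_family_on_def B_def by auto
  moreover have "0 \<le> max (u k p) (v k p)"
    using Pperc_nonneg Pperc_cross_column_fails_le[OF S H] by (rule order_trans)
  moreover have "P.prob (B T \<inter> A T) \<le> P.prob (B T) * max (u k p) (v k p)" for T
  proof -
    have "B T \<inter> A T = {\<omega> \<in> space (perc xix xiy p). explore i0 S \<omega> t = Some T \<and> cross_column \<omega> (i0 + int t) T = None}"
      unfolding A_def B_def by blast
    with Pperc_explore_reaches_then_stops_le[OF S H, where T = T and p = p] show ?thesis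
      unfolding Pperc_def B_def by simp
  qed
  ultimately have "P.prob (\<Union>T\<in>Ts. B T \<inter> A T) \<le> max (u k p) (v k p)"
    by (rule P.prob_UN_Int_disjoint_le)
  moreover have "{\<omega> \<in> space (perc xix xiy p). explore i0 S \<omega> t \<noteq> None \<and> explore i0 S \<omega> (Suc t) = None}
               = (\<Union>T\<in>Ts. B T \<inter> A T)"
    using Zk_explore_subset unfolding Ts_def Zk_subset_iff by (fastforce simp: A_def B_def)
  ultimately show ?thesis
    unfolding Pperc_def by simp
qed

lemma Pperc_explore_Suc_eq_None:
  assumes "finite S"
  shows "Pperc xix xiy p (\<lambda>\<omega>. explore i0 S \<omega> (Suc n) = None)
       = Pperc xix xiy p (\<lambda>\<omega>. explore i0 S \<omega> n = None)
         + Pperc xix xiy p (\<lambda>\<omega>. explore i0 S \<omega> n \<noteq> None \<and> explore i0 S \<omega> (Suc n) = None)"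
proof -
  interpret P: prob_space "perc xix xiy p"
    by (rule prob_space_perc)
  let ?None = "{\<omega> \<in> space (perc xix xiy p). explore i0 S \<omega> n = None}"
  let ?stop = "{\<omega> \<in> space (perc xix xiy p). explore i0 S \<omega> n \<noteq> None \<and> explore i0 S \<omega> (Suc n) = None}"
  have "?stop = {\<omega> \<in> space (perc xix xiy p). explore i0 S \<omega> n \<noteq> None}
                \<inter> {\<omega> \<in> space (perc xix xiy p). explore i0 S \<omega> (Suc n) = None}"
    by blast
  also have "\<dots> \<in> P.events"
    by (intro sets.Int sets_perc_explore[OF assms, where Q = "\<lambda>x. x \<noteq> None"]
        sets_perc_explore[OF assms, where Q = "\<lambda>x. x = None"])
  finally have "?stop \<in> P.events" .
  moreover have "?None \<in> P.events"
    by (rule sets_perc_explore[OF assms])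
  ultimately have "P.prob (?None \<union> ?stop) = P.prob ?None + P.prob ?stop"
    by (intro P.finite_measure_Union) auto
  moreover have "{\<omega> \<in> space (perc xix xiy p). explore i0 S \<omega> (Suc n) = None} = ?None \<union> ?stop"
    by auto
  ultimately show ?thesis
    unfolding Pperc_def by simp
qed

lemma Pperc_explore_fails_le:
  assumes S: "fractal xiy k S" and H: "\<And>t. t < n \<Longrightarrow> H xix k (i0 + int t) \<le> 1"
  shows "Pperc xix xiy p (\<lambda>\<omega>. explore i0 S \<omega> n = None) \<le> real n * max (u k p) (v k p)"
  using H
proof (induction n)
  case 0
  then show ?case
    by (simp add: Pperc_def)
next
  case (Suc n)
  have "Pperc xix xiy p (\<lambda>\<omega>. explore i0 S \<omega> (Suc n) = None)
      = Pperc xix xiy p (\<lambda>\<omega>. explore i0 S \<omega> n = None)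
        + Pperc xix xiy p (\<lambda>\<omega>. explore i0 S \<omega> n \<noteq> None \<and> explore i0 S \<omega> (Suc n) = None)"
    using fractal_finite[OF S] by (rule Pperc_explore_Suc_eq_None)
  also have "\<dots> \<le> real n * max (u k p) (v k p) + max (u k p) (v k p)"
  proof (rule add_mono)
    show "Pperc xix xiy p (\<lambda>\<omega>. explore i0 S \<omega> n = None) \<le> real n * max (u k p) (v k p)"
      using Suc.prems by (intro Suc.IH) simp
    show "Pperc xix xiy p (\<lambda>\<omega>. explore i0 S \<omega> n \<noteq> None \<and> explore i0 S \<omega> (Suc n) = None)
        \<le> max (u k p) (v k p)"
      using Suc.prems by (intro Pperc_explore_stops_le[OF S]) simp
  qed
  finally show ?case
    by (simp add: algebra_simps)
qed

lemma Pperc_no_crossing_le: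
  assumes S: "fractal xiy k S" and "i0 \<le> i1" and sum: "(\<Sum>i\<in>{i0..i1}. H xix k i) \<le> 1"
  shows "Pperc xix xiy p (\<lambda>\<omega>. \<not> (\<exists>T. T \<subseteq> Rk \<omega> k S (i0 * LL^k) ((i1+1) * LL^k) \<and> fractal xiy k T
                                   \<and> ((\<exists>i\<in>{i0..i1}. H xix k i = 0) \<longrightarrow> grouped k T)))
         \<le> real_of_int (i1 - i0 + 1) * max (u k p) (v k p)"
proof -
  define n where "n = nat (i1 - i0 + 1)"
  have n: "i0 + int n = i1 + 1" "real n = real_of_int (i1 - i0 + 1)"
    using \<open>i0 \<le> i1\<close> by (simp_all add: n_def)
  have "H xix k (i0 + int t) \<le> 1" if "t < n" for t
  proof -
    have "H xix k (i0 + int t) \<le> (\<Sum>i\<in>{i0..i1}. H xix k i)"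
      using that n by (intro member_le_sum) auto
    with sum show ?thesis
      by simp
  qed
  then have "Pperc xix xiy p (\<lambda>\<omega>. explore i0 S \<omega> n = None) \<le> real n * max (u k p) (v k p)"
    by (rule Pperc_explore_fails_le[OF S])
  moreover have "Pperc xix xiy p (\<lambda>\<omega>. \<not> (\<exists>T. T \<subseteq> Rk \<omega> k S (i0 * LL^k) ((i1+1) * LL^k) \<and> fractal xiy k T
                                   \<and> ((\<exists>i\<in>{i0..i1}. H xix k i = 0) \<longrightarrow> grouped k T)))
      \<le> Pperc xix xiy p (\<lambda>\<omega>. explore i0 S \<omega> n = None)"
  proof (rule Pperc_mono)
    fix \<omega>
    assume no_crossing: "\<not> (\<exists>T. T \<subseteq> Rk \<omega> k S (i0 * LL^k) ((i1+1) * LL^k) \<and> fractal xiy k T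
                                   \<and> ((\<exists>i\<in>{i0..i1}. H xix k i = 0) \<longrightarrow> grouped k T))"
    show "explore i0 S \<omega> n = None"
    proof (rule ccontr)
      assume "explore i0 S \<omega> n \<noteq> None"
      then obtain T where "explore i0 S \<omega> n = Some T"
        by blast
      from explore_invariant[OF S this] no_crossing show False
        unfolding n(1) atLeastLessThanPlusOne_atLeastAtMost_int by blast
    qed
  qed (rule sets_perc_explore[OF fractal_finite[OF S]])
  ultimately show ?thesis
    unfolding n(2) by (rule order_trans[rotated])
qed

end

lemma sum_le_one_imp_ex_zero:
  fixes f :: "'a \<Rightarrow> nat"
  assumes "finite A" and "2 \<le> card A" and "sum f A \<le> 1"
  shows "\<exists>x\<in>A. f x = 0"
proof (rule ccontr)
  assume "\<not> (\<exists>x\<in>A. f x = 0)"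
  then have "card A \<le> sum f A"
    using sum_mono[of A "\<lambda>_. 1" f] by (simp add: Suc_le_eq)
  with assms(2,3) show False
    by simp
qed

lemma Pperc_no_fractal_crossing_le:
  assumes S: "fractal xiy k S" and "i0 \<le> i1" and sum: "(\<Sum>i\<in>{i0..i1}. H xix k i) \<le> 1"
  shows "Pperc xix xiy p (\<lambda>\<omega>. \<not> (\<exists>T. T \<subseteq> Rk \<omega> k S (i0 * LL^k) ((i1+1) * LL^k) \<and> fractal xiy k T))
         \<le> real_of_int (i1 - i0 + 1) * max (u k p) (v k p)"
proof -
  have "Pperc xix xiy p (\<lambda>\<omega>. \<not> (\<exists>T. T \<subseteq> Rk \<omega> k S (i0 * LL^k) ((i1+1) * LL^k) \<and> fractal xiy k T))
      \<le> Pperc xix xiy p (\<lambda>\<omega>. \<not> (\<exists>T. T \<subseteq> Rk \<omega> k S (i0 * LL^k) ((i1+1) * LL^k) \<and> fractal xiy k T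
                                   \<and> ((\<exists>i\<in>{i0..i1}. H xix k i = 0) \<longrightarrow> grouped k T)))"
    by (rule Pperc_mono) (blast, rule sets_perc_Rk[OF fractal_finite[OF S]])
  also have "\<dots> \<le> real_of_int (i1 - i0 + 1) * max (u k p) (v k p)"
    using S \<open>i0 \<le> i1\<close> sum by (rule Pperc_no_crossing_le)
  finally show ?thesis .
qed

lemma Pperc_no_grouped_fractal_crossing_le:
  assumes S: "fractal xiy k S" and "1 \<le> i1 - i0" and sum: "(\<Sum>i\<in>{i0..i1}. H xix k i) \<le> 1"
  shows "Pperc xix xiy p (\<lambda>\<omega>. \<not> (\<exists>T. T \<subseteq> Rk \<omega> k S (i0 * LL^k) ((i1+1) * LL^k) \<and> grouped k T \<and> fractal xiy k T))
         \<le> real_of_int (i1 - i0 + 1) * max (u k p) (v k p)"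
proof -
  have "\<exists>i\<in>{i0..i1}. H xix k i = 0"
    using \<open>1 \<le> i1 - i0\<close> sum by (intro sum_le_one_imp_ex_zero) auto
  then have "Pperc xix xiy p (\<lambda>\<omega>. \<not> (\<exists>T. T \<subseteq> Rk \<omega> k S (i0 * LL^k) ((i1+1) * LL^k) \<and> grouped k T \<and> fractal xiy k T))
      \<le> Pperc xix xiy p (\<lambda>\<omega>. \<not> (\<exists>T. T \<subseteq> Rk \<omega> k S (i0 * LL^k) ((i1+1) * LL^k) \<and> fractal xiy k T
                                   \<and> ((\<exists>i\<in>{i0..i1}. H xix k i = 0) \<longrightarrow> grouped k T)))"
    by (intro Pperc_mono) (blast, rule sets_perc_Rk[OF fractal_finite[OF S]])
  also have "\<dots> \<le> real_of_int (i1 - i0 + 1) * max (u k p) (v k p)"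
    using S _ sum by (rule Pperc_no_crossing_le) (use \<open>1 \<le> i1 - i0\<close> in simp)
  finally show ?thesis .
qed

theorem lemma5p1:
  fixes k :: nat and p :: real and xix xiy :: "int \<Rightarrow> nat"
  assumes "0 \<le> p" and "p \<le> 1"
  shows
   "(\<forall>i0 i1 j S. i0 \<le> i1 \<longrightarrow> H xiy k j = 0 \<longrightarrow> (\<Sum>i\<in>{i0..i1}. H xix k i) \<le> 1
       \<longrightarrow> fractal xiy k S \<longrightarrow> S \<subseteq> Iv k j \<longrightarrow>
       Pperc xix xiy p (\<lambda>\<omega>. \<not> (\<exists>T. T \<subseteq> Rk \<omega> k S (i0 * LL^k) ((i1+1) * LL^k) \<and> fractal xiy k T))
         \<le> real_of_int (i1 - i0 + 1) * max (u k p) (v k p))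
  \<and> (\<forall>i0 i1 S. i1 - i0 \<ge> 1 \<longrightarrow> (\<Sum>i\<in>{i0..i1}. H xix k i) \<le> 1 \<longrightarrow> fractal xiy k S \<longrightarrow>
       Pperc xix xiy p (\<lambda>\<omega>. \<not> (\<exists>T. T \<subseteq> Rk \<omega> k S (i0 * LL^k) ((i1+1) * LL^k)
                                   \<and> grouped k T \<and> fractal xiy k T))
         \<le> real_of_int (i1 - i0 + 1) * max (u k p) (v k p))"
  using Pperc_no_fractal_crossing_le Pperc_no_grouped_fractal_crossing_le by auto

end
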